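(* Let $R$ be a ring and $n\in\mathbb{N}$. Then: (1) If $r\in J(R)$, then the unit $1+r$ has exactly one clean decomposition (i.e. exactly one way of writing it as $e+u$ with $e$ idempotent and $u$ a unit). (2) Suppose $U(R)=1+J(R)$. Then $R$ is $n$-torsion clean if and only if $R$ is clean and $U(R)$ has finite exponent $n$; likewise, $R$ is strongly $n$-torsion clean if and only if $R$ is strongly clean and $U(R)$ has finite exponent $n$. Moreover, if $U(R)=1+J(R)$ and one of these equivalent conditions holds, then $R/J(R)$ is a boolean ring.
   Context: All rings are associative with identity. $U(R)$ is the unit group and $J(R)$ the Jacobson radical. A ring is clean (resp. strongly clean) if every element is $e+u$ with $e$ idempotent, $u$ a unit (resp. additionally $eu=ue$). A ring $R$ is (strongly) $n$-torsion clean if every $r\in R$ can be written $r=e+u$ with $e^2=e$, $u\in U(R)$, $u^n=1$ (and $eu=ue$ in the strong case), and $n$ is the smallest natural number with this property. *)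

theory Defs
  imports Main
begin

definition units :: "'a::ring_1 set" where
  "units = {u. \<exists>v. u * v = 1 \<and> v * u = 1}"

definition idem :: "'a::ring_1 \<Rightarrow> bool" where
  "idem e \<longleftrightarrow> e * e = e"

definition left_ideal :: "'a::ring_1 set \<Rightarrow> bool" where
  "left_ideal I \<longleftrightarrow> 0 \<in> I \<and> (\<forall>x\<in>I. \<forall>y\<in>I. x - y \<in> I) \<and> (\<forall>r. \<forall>x\<in>I. r * x \<in> I)"

definition maximal_left_ideal :: "'a::ring_1 set \<Rightarrow> bool" where
  "maximal_left_ideal I \<longleftrightarrow> left_ideal I \<and> I \<noteq> UNIV \<and>
     (\<forall>K. left_ideal K \<and> I \<subseteq> K \<and> K \<noteq> UNIV \<longrightarrow> K = I)"

definition jacobson :: "'a::ring_1 set" where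
  "jacobson = \<Inter> {I. maximal_left_ideal I}"

definition clean_ring :: "'a::ring_1 itself \<Rightarrow> bool" where
  "clean_ring _ \<longleftrightarrow> (\<forall>r::'a. \<exists>e u. idem e \<and> u \<in> units \<and> r = e + u)"

definition strongly_clean_ring :: "'a::ring_1 itself \<Rightarrow> bool" where
  "strongly_clean_ring _ \<longleftrightarrow>
     (\<forall>r::'a. \<exists>e u. idem e \<and> u \<in> units \<and> e * u = u * e \<and> r = e + u)"

definition tc_prop :: "'a::ring_1 itself \<Rightarrow> nat \<Rightarrow> bool" where
  "tc_prop _ n \<longleftrightarrow> (\<forall>r::'a. \<exists>e u. idem e \<and> u \<in> units \<and> u ^ n = 1 \<and> r = e + u)"

definition stc_prop :: "'a::ring_1 itself \<Rightarrow> nat \<Rightarrow> bool" where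
  "stc_prop _ n \<longleftrightarrow> (\<forall>r::'a. \<exists>e u. idem e \<and> u \<in> units \<and> u ^ n = 1 \<and> e * u = u * e \<and> r = e + u)"

definition n_torsion_clean :: "'a::ring_1 itself \<Rightarrow> nat \<Rightarrow> bool" where
  "n_torsion_clean T n \<longleftrightarrow> 1 \<le> n \<and> tc_prop T n \<and> (\<forall>m. 1 \<le> m \<and> m < n \<longrightarrow> \<not> tc_prop T m)"

definition strongly_n_torsion_clean :: "'a::ring_1 itself \<Rightarrow> nat \<Rightarrow> bool" where
  "strongly_n_torsion_clean T n \<longleftrightarrow> 1 \<le> n \<and> stc_prop T n \<and> (\<forall>m. 1 \<le> m \<and> m < n \<longrightarrow> \<not> stc_prop T m)"

definition units_exponent :: "'a::ring_1 itself \<Rightarrow> nat \<Rightarrow> bool" where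
  "units_exponent _ n \<longleftrightarrow> 1 \<le> n \<and> (\<forall>u::'a\<in>units. u ^ n = 1) \<and>
     (\<forall>m. 1 \<le> m \<and> m < n \<longrightarrow> \<not> (\<forall>u::'a\<in>units. u ^ m = 1))"

text \<open>R/J(R) is boolean: every coset x + J(R) is idempotent, i.e. x*x - x \<in> J(R).\<close>
definition boolean_mod_jacobson :: "'a::ring_1 itself \<Rightarrow> bool" where
  "boolean_mod_jacobson _ \<longleftrightarrow> (\<forall>x::'a. x * x - x \<in> jacobson)"

end

theory Submission
  imports Defs
begin

text \<open>Elements \<open>1 + r\<close> with \<open>r \<in> J(R)\<close> are units, and a unit minus an element of \<open>J(R)\<close>
  is again a unit. So in a clean decomposition \<open>1 + r = e + u\<close> the idempotent \<open>1 - e = u - r\<close> is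
  a unit, hence \<open>e = 0\<close>. If \<open>U(R) = 1 + J(R)\<close>, every unit therefore has only the trivial clean
  decomposition, so a torsion condition on the units occurring in clean decompositions is the same
  as a torsion condition on all of \<open>U(R)\<close>. Moreover \<open>-1 \<in> 1 + J(R)\<close> gives \<open>2 \<in> J(R)\<close>, and
  writing \<open>x = e + 1 + j\<close> yields \<open>x\<^sup>2 - x \<equiv> 2e \<equiv> 0\<close> modulo \<open>J(R)\<close>.\<close>

lemma mem_jacobson_iff: "x \<in> jacobson \<longleftrightarrow> (\<forall>I. maximal_left_ideal I \<longrightarrow> x \<in> I)"
  unfolding jacobson_def by auto

lemma maximal_left_ideal_imp_left_ideal: "maximal_left_ideal I \<Longrightarrow> left_ideal I"
  unfolding maximal_left_ideal_def by simp

lemma left_ideal_jacobson: "left_ideal (jacobson :: 'a::ring_1 set)"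
  unfolding left_ideal_def
proof (intro conjI ballI allI)
  show "0 \<in> jacobson"
    unfolding mem_jacobson_iff by (metis maximal_left_ideal_imp_left_ideal left_ideal_def)
  fix x y r :: 'a
  assume "x \<in> jacobson" "y \<in> jacobson"
  then show "x - y \<in> jacobson"
    unfolding mem_jacobson_iff by (metis maximal_left_ideal_imp_left_ideal left_ideal_def)
next
  fix x r :: 'a
  assume "x \<in> jacobson"
  then show "r * x \<in> jacobson"
    unfolding mem_jacobson_iff by (metis maximal_left_ideal_imp_left_ideal left_ideal_def)
qed

lemma jacobson_zero: "0 \<in> (jacobson :: 'a::ring_1 set)"
  and jacobson_diff: "x \<in> jacobson \<Longrightarrow> y \<in> jacobson \<Longrightarrow> x - y \<in> (jacobson :: 'a::ring_1 set)"
  and jacobson_mult_left: "x \<in> jacobson \<Longrightarrow> r * x \<in> (jacobson :: 'a::ring_1 set)"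
  using left_ideal_jacobson unfolding left_ideal_def by blast+

lemma jacobson_uminus: "x \<in> jacobson \<Longrightarrow> - x \<in> (jacobson :: 'a::ring_1 set)"
  using jacobson_diff[OF jacobson_zero] by fastforce

lemma jacobson_add: "x \<in> jacobson \<Longrightarrow> y \<in> jacobson \<Longrightarrow> x + y \<in> (jacobson :: 'a::ring_1 set)"
  using jacobson_diff[of x "- y"] jacobson_uminus[of y] by simp

lemma left_ideal_one_iff_UNIV:
  assumes "left_ideal (I :: 'a::ring_1 set)"
  shows "1 \<in> I \<longleftrightarrow> I = UNIV"
proof
  assume "1 \<in> I"
  then have "r * 1 \<in> I" for r :: 'a
    using assms unfolding left_ideal_def by blast
  then show "I = UNIV" by auto
qed simp

lemma left_ideal_Union_chain:
  fixes C :: "'a::ring_1 set set"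
  assumes "C \<noteq> {}" and "chain\<^sub>\<subseteq> C" and "\<forall>X\<in>C. left_ideal X"
  shows "left_ideal (\<Union>C)"
proof -
  have "x - y \<in> \<Union>C" if xy: "x \<in> \<Union>C" "y \<in> \<Union>C" for x y
  proof -
    obtain X Y where XY: "X \<in> C" "Y \<in> C" "x \<in> X" "y \<in> Y"
      using xy by blast
    have "X \<union> Y \<in> C"
      using XY \<open>chain\<^sub>\<subseteq> C\<close> unfolding chain_subset_def by (metis Un_absorb1 Un_absorb2)
    then have "x - y \<in> X \<union> Y"
      using XY assms(3) unfolding left_ideal_def by (meson UnCI)
    then show ?thesis
      using \<open>X \<union> Y \<in> C\<close> by blast
  qed
  moreover have "r * x \<in> \<Union>C" if "x \<in> \<Union>C" for r x
    using assms(3) that unfolding left_ideal_def by (meson UnionE UnionI)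
  moreover obtain X where "X \<in> C"
    using assms(1) by blast
  then have "0 \<in> \<Union>C"
    using assms(3) unfolding left_ideal_def by blast
  ultimately show ?thesis
    unfolding left_ideal_def by (intro conjI ballI allI)
qed

lemma proper_left_ideal_in_maximal:
  fixes I :: "'a::ring_1 set"
  assumes "left_ideal I" and "1 \<notin> I"
  obtains M where "maximal_left_ideal M" and "I \<subseteq> M"
proof -
  define A where "A = {K. left_ideal K \<and> I \<subseteq> K \<and> (1::'a) \<notin> K}"
  have "\<forall>C\<in>chains A. \<exists>U\<in>A. \<forall>X\<in>C. X \<subseteq> U"
  proof
    fix C
    assume C: "C \<in> chains A"
    show "\<exists>U\<in>A. \<forall>X\<in>C. X \<subseteq> U"
    proof (cases "C = {}")
      case True
      then show ?thesis
        using assms unfolding A_def by auto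
    next
      case False
      from C have "C \<subseteq> A" "chain\<^sub>\<subseteq> C"
        unfolding chains_def by auto
      then have "left_ideal (\<Union>C)" "I \<subseteq> \<Union>C" "1 \<notin> \<Union>C"
        using left_ideal_Union_chain[OF False] False unfolding A_def by auto
      then have "\<Union>C \<in> A"
        unfolding A_def by simp
      then show ?thesis by blast
    qed
  qed
  from Zorn_Lemma2[OF this] obtain M
    where M: "M \<in> A" and M_max: "\<forall>X\<in>A. M \<subseteq> X \<longrightarrow> X = M"
    by blast
  have "maximal_left_ideal M"
    unfolding maximal_left_ideal_def
  proof (intro conjI allI impI)
    show "left_ideal M" "M \<noteq> UNIV"
      using M unfolding A_def by auto
    fix K
    assume K: "left_ideal K \<and> M \<subseteq> K \<and> K \<noteq> UNIV"
    then have "K \<in> A"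
      using M left_ideal_one_iff_UNIV[of K] unfolding A_def by auto
    then show "K = M"
      using M_max K by blast
  qed
  with M show ?thesis
    using that unfolding A_def by blast
qed

lemma units_mult: "u \<in> units \<Longrightarrow> v \<in> units \<Longrightarrow> u * v \<in> (units :: 'a::ring_1 set)"
proof -
  assume "u \<in> units" "v \<in> units"
  then obtain u' v' where "u * u' = 1" "u' * u = 1" "v * v' = 1" "v' * v = 1"
    unfolding units_def by blast
  then have "(u * v) * (v' * u') = 1" "(v' * u') * (u * v) = 1"
    by (simp_all add: mult.assoc, simp_all add: mult.assoc[symmetric])
  then show ?thesis
    unfolding units_def by blast
qed

lemma minus_one_in_units: "(- 1 :: 'a::ring_1) \<in> units"
  unfolding units_def by (auto intro: exI[of _ "- 1"])

lemma idem_in_units_eq_one: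
  assumes "idem e" and "e \<in> (units :: 'a::ring_1 set)"
  shows "e = 1"
proof -
  obtain w where "w * e = 1"
    using assms(2) unfolding units_def by blast
  then have "w * (e * e) = 1"
    using assms(1) unfolding idem_def by simp
  then have "e = 1 * e" "(w * e) * e = 1"
    by (simp_all add: mult.assoc)
  with \<open>w * e = 1\<close> show "e = 1" by simp
qed

lemma idem_one_minus: "idem e \<Longrightarrow> idem (1 - (e :: 'a::ring_1))"
  unfolding idem_def by (simp add: algebra_simps)

text \<open>Jacobson's lemma: if \<open>w\<close> inverts \<open>1 + ab\<close>, then \<open>1 - bwa\<close> inverts \<open>1 + ba\<close>.\<close>

lemma one_plus_mult_commute_units:
  fixes a b :: "'a::ring_1"
  assumes "1 + a * b \<in> units"
  shows "1 + b * a \<in> units"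
proof -
  obtain w where w: "(1 + a * b) * w = 1" "w * (1 + a * b) = 1"
    using assms unfolding units_def by blast
  have "(1 + b * a) * (1 - b * w * a) = 1 + b * a - b * ((1 + a * b) * w) * a"
    "(1 - b * w * a) * (1 + b * a) = 1 + b * a - b * (w * (1 + a * b)) * a"
    by (simp_all add: algebra_simps mult.assoc)
  then show ?thesis
    using w unfolding units_def by auto
qed

subsection \<open>Units attached to the Jacobson radical\<close>

lemma left_ideal_principal: "left_ideal (range (\<lambda>r. r * (a :: 'a::ring_1)))"
  unfolding left_ideal_def
proof (intro conjI ballI allI)
  show "0 \<in> range (\<lambda>r. r * a)"
    by (rule image_eqI[of _ _ 0]) simp_all
  fix x y r
  assume "x \<in> range (\<lambda>r. r * a)" "y \<in> range (\<lambda>r. r * a)"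
  then show "x - y \<in> range (\<lambda>r. r * a)"
    by (auto simp: left_diff_distrib intro: image_eqI[of _ _ "_ - _"])
next
  fix x r
  assume "x \<in> range (\<lambda>r. r * a)"
  then show "r * x \<in> range (\<lambda>r. r * a)"
    by (auto simp: mult.assoc intro: image_eqI[of _ _ "_ * _"])
qed

lemma jacobson_left_invertible_one_plus:
  fixes x :: "'a::ring_1"
  assumes "x \<in> jacobson"
  obtains a where "a * (1 + x) = 1"
proof (rule ccontr)
  assume no_inverse: "\<not> thesis"
  define I where "I = range (\<lambda>r. r * (1 + x))"
  have "left_ideal I"
    unfolding I_def by (rule left_ideal_principal)
  moreover have "1 \<notin> I"
    using no_inverse that unfolding I_def by auto
  ultimately obtain M where M: "maximal_left_ideal M" "I \<subseteq> M"
    using proper_left_ideal_in_maximal by blast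
  have "1 * (1 + x) \<in> I"
    unfolding I_def by (rule rangeI)
  then have "1 + x \<in> M" "x \<in> M"
    using M assms unfolding mem_jacobson_iff by auto
  then have "(1 + x) - x \<in> M"
    using maximal_left_ideal_imp_left_ideal[OF M(1)] unfolding left_ideal_def by blast
  then show False
    using M(1) left_ideal_one_iff_UNIV[of M] unfolding maximal_left_ideal_def by simp
qed

lemma one_plus_jacobson_in_units:
  fixes x :: "'a::ring_1"
  assumes "x \<in> jacobson"
  shows "1 + x \<in> units"
proof -
  obtain a where a: "a * (1 + x) = 1"
    using jacobson_left_invertible_one_plus assms by blast
  have "a = 1 + (- (a * x))"
    using a by (simp add: algebra_simps)
  moreover have "- (a * x) \<in> jacobson"
    using jacobson_uminus jacobson_mult_left assms by blast
  ultimately obtain b where b: "b * a = 1"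
    using jacobson_left_invertible_one_plus by metis
  have "1 + x = b * (a * (1 + x))"
    using b by (simp add: mult.assoc[symmetric])
  then have "(1 + x) * a = 1"
    using a b by simp
  then show ?thesis
    using a unfolding units_def by blast
qed

lemma units_diff_jacobson:
  fixes u r :: "'a::ring_1"
  assumes "u \<in> units" and "r \<in> jacobson"
  shows "u - r \<in> units"
proof -
  obtain v where "u * v = 1"
    using assms(1) unfolding units_def by blast
  then have "u - r = u * (1 + - (v * r))"
    by (simp add: algebra_simps mult.assoc[symmetric])
  moreover have "1 + - (v * r) \<in> units"
    using one_plus_jacobson_in_units jacobson_uminus jacobson_mult_left assms(2) by blast
  ultimately show ?thesis
    using units_mult assms(1) by simp
qed

lemma clean_decomposition_one_plus_jacobson:
  fixes r :: "'a::ring_1"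
  assumes "r \<in> jacobson" and "idem e" and "u \<in> units" and "1 + r = e + u"
  shows "e = 0" and "u = 1 + r"
proof -
  have "1 - e = u - r"
    using assms(4) by (simp add: algebra_simps)
  then have "1 - e = 1"
    using idem_in_units_eq_one idem_one_minus units_diff_jacobson assms(1-3) by metis
  then show "e = 0" by simp
  then show "u = 1 + r"
    using assms(4) by simp
qed

lemma unique_clean_decomposition_one_plus_jacobson:
  fixes r :: "'a::ring_1"
  assumes "r \<in> jacobson"
  shows "\<exists>!p::'a \<times> 'a. idem (fst p) \<and> snd p \<in> units \<and> 1 + r = fst p + snd p"
proof (rule ex1I[of _ "(0, 1 + r)"])
  show "idem (fst (0::'a, 1 + r)) \<and> snd (0::'a, 1 + r) \<in> units
      \<and> 1 + r = fst (0::'a, 1 + r) + snd (0::'a, 1 + r)"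
    using one_plus_jacobson_in_units[OF assms] unfolding idem_def by simp
qed (use clean_decomposition_one_plus_jacobson assms in \<open>auto simp: prod_eq_iff\<close>)

subsection \<open>Rings with \<open>U(R) = 1 + J(R)\<close>\<close>

lemma units_one_plus_jacobsonE:
  fixes u :: "'a::ring_1"
  assumes "(units :: 'a set) = (\<lambda>j. 1 + j) ` jacobson" and "u \<in> units"
  obtains j where "j \<in> jacobson" and "u = 1 + j"
  using assms by blast

lemma jacobson_mult_right:
  fixes j :: "'a::ring_1"
  assumes "(units :: 'a set) = (\<lambda>j. 1 + j) ` jacobson" and "j \<in> jacobson"
  shows "j * a \<in> jacobson"
proof -
  have "1 + j * a \<in> units"
    using one_plus_mult_commute_units one_plus_jacobson_in_units jacobson_mult_left assms(2)
    by blast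
  then obtain k where "k \<in> jacobson" "1 + j * a = 1 + k"
    using units_one_plus_jacobsonE[OF assms(1)] by blast
  then show ?thesis by simp
qed

lemma units_pow_eq_one_if_torsion_clean:
  fixes w :: "'a::ring_1"
  assumes "(units :: 'a set) = (\<lambda>j. 1 + j) ` jacobson"
    and "\<forall>r::'a. \<exists>e u. idem e \<and> u \<in> units \<and> u ^ m = 1 \<and> r = e + u"
    and "w \<in> units"
  shows "w ^ m = 1"
proof -
  obtain j where j: "j \<in> jacobson" "w = 1 + j"
    using units_one_plus_jacobsonE[OF assms(1,3)] by blast
  obtain e u where "idem e" "u \<in> units" "u ^ m = 1" "w = e + u"
    using assms(2) by blast
  then show ?thesis
    using clean_decomposition_one_plus_jacobson(2) j by metis
qed

lemma tc_prop_iff_clean_units_pow: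
  assumes "(units :: 'a::ring_1 set) = (\<lambda>j. 1 + j) ` jacobson"
  shows "tc_prop TYPE('a) m \<longleftrightarrow> clean_ring TYPE('a) \<and> (\<forall>u::'a\<in>units. u ^ m = 1)"
  using units_pow_eq_one_if_torsion_clean[OF assms]
  unfolding tc_prop_def clean_ring_def by blast

lemma stc_prop_iff_strongly_clean_units_pow:
  assumes "(units :: 'a::ring_1 set) = (\<lambda>j. 1 + j) ` jacobson"
  shows "stc_prop TYPE('a) m \<longleftrightarrow> strongly_clean_ring TYPE('a) \<and> (\<forall>u::'a\<in>units. u ^ m = 1)"
proof -
  have "stc_prop TYPE('a) m \<Longrightarrow> \<forall>r::'a. \<exists>e u. idem e \<and> u \<in> units \<and> u ^ m = 1 \<and> r = e + u"
    unfolding stc_prop_def by blast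
  then show ?thesis
    using units_pow_eq_one_if_torsion_clean[OF assms]
    unfolding stc_prop_def strongly_clean_ring_def by blast
qed

lemma strongly_clean_imp_clean: "strongly_clean_ring TYPE('a::ring_1) \<Longrightarrow> clean_ring TYPE('a)"
  unfolding strongly_clean_ring_def clean_ring_def by blast

lemma boolean_mod_jacobson_if_clean:
  assumes units_eq: "(units :: 'a::ring_1 set) = (\<lambda>j. 1 + j) ` jacobson"
    and "clean_ring TYPE('a)"
  shows "boolean_mod_jacobson TYPE('a)"
  unfolding boolean_mod_jacobson_def
proof
  fix x :: 'a
  obtain k :: 'a where k: "k \<in> jacobson" "- 1 = 1 + k"
    using units_one_plus_jacobsonE[OF units_eq minus_one_in_units] by blast
  have "- k = 1 - (1 + k)"
    by simp
  also have "\<dots> = 2"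
    unfolding k(2)[symmetric] by simp
  finally have two: "(2::'a) \<in> jacobson"
    using jacobson_uminus[OF k(1)] by simp
  obtain e u where "idem e" "u \<in> units" "x = e + u"
    using assms(2) unfolding clean_ring_def by blast
  moreover obtain j where j: "j \<in> jacobson" "u = 1 + j"
    using units_one_plus_jacobsonE[OF units_eq \<open>u \<in> units\<close>] by blast
  ultimately have "x * x - x = (e * 2 + e * j) + (j * e + (j + j * j))"
    unfolding idem_def by (simp add: algebra_simps mult_2_right)
  moreover have "e * 2 + e * j \<in> jacobson"
    using two j(1) by (intro jacobson_add jacobson_mult_left)
  moreover have "j * e + (j + j * j) \<in> jacobson"
    using j(1) by (intro jacobson_add jacobson_mult_left jacobson_mult_right[OF units_eq])
  ultimately show "x * x - x \<in> jacobson"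
    using jacobson_add by simp
qed

theorem proposition1p2:
  fixes n :: nat
  shows "(\<forall>r::'a::ring_1. r \<in> jacobson \<longrightarrow>
            (\<exists>!p::'a \<times> 'a. idem (fst p) \<and> snd p \<in> units \<and> 1 + r = fst p + snd p))
       \<and> ((units :: 'a set) = (\<lambda>j. 1 + j) ` jacobson \<longrightarrow>
           (n_torsion_clean TYPE('a) n \<longleftrightarrow> clean_ring TYPE('a) \<and> units_exponent TYPE('a) n)
         \<and> (strongly_n_torsion_clean TYPE('a) n \<longleftrightarrow>
              strongly_clean_ring TYPE('a) \<and> units_exponent TYPE('a) n)
         \<and> ((n_torsion_clean TYPE('a) n \<or> (clean_ring TYPE('a) \<and> units_exponent TYPE('a) n)
             \<or> strongly_n_torsion_clean TYPE('a) n
             \<or> (strongly_clean_ring TYPE('a) \<and> units_exponent TYPE('a) n))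
            \<longrightarrow> boolean_mod_jacobson TYPE('a)))"
proof (intro conjI allI impI)
  fix r :: 'a
  assume "r \<in> jacobson"
  then show "\<exists>!p::'a \<times> 'a. idem (fst p) \<and> snd p \<in> units \<and> 1 + r = fst p + snd p"
    by (rule unique_clean_decomposition_one_plus_jacobson)
next
  assume units_eq: "(units :: 'a set) = (\<lambda>j. 1 + j) ` jacobson"
  show tc: "n_torsion_clean TYPE('a) n \<longleftrightarrow> clean_ring TYPE('a) \<and> units_exponent TYPE('a) n"
    unfolding n_torsion_clean_def units_exponent_def tc_prop_iff_clean_units_pow[OF units_eq]
    by blast
  show stc: "strongly_n_torsion_clean TYPE('a) n \<longleftrightarrow>
      strongly_clean_ring TYPE('a) \<and> units_exponent TYPE('a) n"
    unfolding strongly_n_torsion_clean_def units_exponent_def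
      stc_prop_iff_strongly_clean_units_pow[OF units_eq]
    by blast
  assume "n_torsion_clean TYPE('a) n \<or> (clean_ring TYPE('a) \<and> units_exponent TYPE('a) n)
      \<or> strongly_n_torsion_clean TYPE('a) n
      \<or> (strongly_clean_ring TYPE('a) \<and> units_exponent TYPE('a) n)"
  then have "clean_ring TYPE('a)"
    using tc stc strongly_clean_imp_clean by blast
  then show "boolean_mod_jacobson TYPE('a)"
    using boolean_mod_jacobson_if_clean[OF units_eq] by blast
qed

end
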